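(* A risk-sharing rule $\boldsymbol{C}$ on $\chi^n$ is the uniform RS rule if and only if it satisfies the reshuffling property and has strongly aggregate contributions.
   Context: Fix a probability space $(\Omega,\mathcal{F},\mathbb{P})$ and an integer $n\ge 1$. Let $\chi$ be a convex cone of non-negative random variables on this space (closed under addition and under multiplication by positive scalars) with $0\in\chi$. All equalities between random variables are understood almost surely. A pool is a vector $\boldsymbol{X}=(X_1,\ldots,X_n)\in\chi^n$, with aggregate loss $S_{\boldsymbol{X}}=\sum_{i=1}^n X_i$. A risk-sharing (RS) rule is a mapping $\boldsymbol{C}$ assigning to every pool $\boldsymbol{X}\in\chi^n$ a vector $\boldsymbol{C}[\boldsymbol{X}]=(C_1[\boldsymbol{X}],\ldots,C_n[\boldsymbol{X}])$ of real-valued random variables satisfying $\sum_{i=1}^n C_i[\boldsymbol{X}]=S_{\boldsymbol{X}}$. The uniform RS rule is given by $C_i[\boldsymbol{X}]=S_{\boldsymbol{X}}/n$ for all $i$ and all pools. For a permutation $\pi$ of $\{1,\ldots,n\}$, $\boldsymbol{X}^\pi=(X_{\pi(1)},\ldots,X_{\pi(n)})$. Reshuffling property: $C_i[\boldsymbol{X}^\pi]=C_{\pi(i)}[\boldsymbol{X}]$ for all pools $\boldsymbol{X}$, permutations $\pi$ and indices $i$. Strongly aggregate contributions: there exists a single function $\mathbf{h}=(h_1,\ldots,h_n):\mathbb{R}\to\mathbb{R}^n$ (the same for all pools) such that $C_i[\boldsymbol{X}]=h_i(S_{\boldsymbol{X}})$ for every pool $\boldsymbol{X}\in\chi^n$ and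 every $i$. *)

theory Defs
  imports "HOL-Probability.Probability" "HOL-Combinatorics.Permutations"
begin

text \<open>The cone chi is written K.\<close>

definition convex_cone_rv :: "'a measure \<Rightarrow> ('a \<Rightarrow> real) set \<Rightarrow> bool" where
  "convex_cone_rv M K \<longleftrightarrow>
     K \<subseteq> borel_measurable M \<and>
     (\<forall>X\<in>K. \<forall>\<omega>\<in>space M. X \<omega> \<ge> 0) \<and>
     (\<lambda>_. 0) \<in> K \<and>
     (\<forall>X\<in>K. \<forall>Y\<in>K. (\<lambda>\<omega>. X \<omega> + Y \<omega>) \<in> K) \<and>
     (\<forall>X\<in>K. \<forall>c::real. c > 0 \<longrightarrow> (\<lambda>\<omega>. c * X \<omega>) \<in> K)"

definition is_pool :: "('a \<Rightarrow> real) set \<Rightarrow> nat \<Rightarrow> ('a \<Rightarrow> real) list \<Rightarrow> bool" where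
  "is_pool K n X \<longleftrightarrow> length X = n \<and> set X \<subseteq> K"

definition agg :: "('a \<Rightarrow> real) list \<Rightarrow> 'a \<Rightarrow> real" where
  "agg X = (\<lambda>\<omega>. \<Sum>i<length X. (X ! i) \<omega>)"

definition RS_rule :: "'a measure \<Rightarrow> ('a \<Rightarrow> real) set \<Rightarrow> nat \<Rightarrow>
    (('a \<Rightarrow> real) list \<Rightarrow> nat \<Rightarrow> 'a \<Rightarrow> real) \<Rightarrow> bool" where
  "RS_rule M K n C \<longleftrightarrow>
     (\<forall>X. is_pool K n X \<longrightarrow>
        (\<forall>i<n. C X i \<in> borel_measurable M) \<and>
        (AE \<omega> in M. (\<Sum>i<n. C X i \<omega>) = agg X \<omega>))"

definition uniform_rule :: "'a measure \<Rightarrow> ('a \<Rightarrow> real) set \<Rightarrow> nat \<Rightarrow>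
    (('a \<Rightarrow> real) list \<Rightarrow> nat \<Rightarrow> 'a \<Rightarrow> real) \<Rightarrow> bool" where
  "uniform_rule M K n C \<longleftrightarrow>
     (\<forall>X. is_pool K n X \<longrightarrow> (\<forall>i<n. AE \<omega> in M. C X i \<omega> = agg X \<omega> / real n))"

text \<open>X^pi = (X_{pi(1)},...,X_{pi(n)}) is permute_list pi X.\<close>
definition reshuffling :: "'a measure \<Rightarrow> ('a \<Rightarrow> real) set \<Rightarrow> nat \<Rightarrow>
    (('a \<Rightarrow> real) list \<Rightarrow> nat \<Rightarrow> 'a \<Rightarrow> real) \<Rightarrow> bool" where
  "reshuffling M K n C \<longleftrightarrow>
     (\<forall>X \<pi>. is_pool K n X \<longrightarrow> \<pi> permutes {..<n} \<longrightarrow>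
        (\<forall>i<n. AE \<omega> in M. C (permute_list \<pi> X) i \<omega> = C X (\<pi> i) \<omega>))"

definition strongly_aggregate :: "'a measure \<Rightarrow> ('a \<Rightarrow> real) set \<Rightarrow> nat \<Rightarrow>
    (('a \<Rightarrow> real) list \<Rightarrow> nat \<Rightarrow> 'a \<Rightarrow> real) \<Rightarrow> bool" where
  "strongly_aggregate M K n C \<longleftrightarrow>
     (\<exists>h :: nat \<Rightarrow> real \<Rightarrow> real. \<forall>X. is_pool K n X \<longrightarrow>
        (\<forall>i<n. AE \<omega> in M. C X i \<omega> = h i (agg X \<omega>)))"

end

theory Submission
  imports Defs
begin

lemma agg_permute_list:
  assumes "p permutes {..<length X}"
  shows "agg (permute_list p X) = agg X"
proof
  fix \<omega>
  have "agg (permute_list p X) \<omega> = (\<Sum>i<length X. (X ! p i) \<omega>)"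
    unfolding agg_def by (intro sum.cong) (auto simp: permute_list_nth[OF assms])
  also have "\<dots> = (\<Sum>i<length X. (X ! i) \<omega>)"
    using sum.permute[OF assms, of "\<lambda>i. (X ! i) \<omega>"] by (simp add: comp_def)
  finally show "agg (permute_list p X) \<omega> = agg X \<omega>"
    unfolding agg_def .
qed

lemma is_pool_permute_list:
  assumes "is_pool K n X" and "p permutes {..<n}"
  shows "is_pool K n (permute_list p X)"
proof -
  have "set (permute_list p X) = set X"
    using mset_permute_list[of p X] assms unfolding is_pool_def by (metis set_mset_mset)
  then show ?thesis
    using assms unfolding is_pool_def by simp
qed

lemma reshuffling_if_uniform_rule:
  assumes "uniform_rule M K n C"
  shows "reshuffling M K n C"
  unfolding reshuffling_def
proof (intro allI impI)
  fix X p i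
  assume X: "is_pool K n X" and p: "p permutes {..<n}" and i: "i < n"
  have "p i < n"
    using p i permutes_in_image by fastforce
  then have "AE \<omega> in M. C X (p i) \<omega> = agg X \<omega> / real n"
    using assms X unfolding uniform_rule_def by blast
  moreover have "agg (permute_list p X) = agg X"
    using X p agg_permute_list unfolding is_pool_def by blast
  then have "AE \<omega> in M. C (permute_list p X) i \<omega> = agg X \<omega> / real n"
    using assms is_pool_permute_list[OF X p] i unfolding uniform_rule_def by metis
  ultimately show "AE \<omega> in M. C (permute_list p X) i \<omega> = C X (p i) \<omega>"
    by eventually_elim simp
qed

lemma strongly_aggregate_if_uniform_rule:
  assumes "uniform_rule M K n C"
  shows "strongly_aggregate M K n C"
  unfolding strongly_aggregate_def
  by (rule exI[of _ "\<lambda>_ s. s / real n"]) (use assms in \<open>simp add: uniform_rule_def\<close>)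

text \<open>The transposition of i and j leaves the aggregate loss unchanged, so
  h i (S X) is both the i-th contribution to X and, by reshuffling, the j-th one.\<close>
lemma AE_contributions_eq_if_reshuffling_strongly_aggregate:
  assumes "reshuffling M K n C" and "strongly_aggregate M K n C"
    and X: "is_pool K n X" and i: "i < n" and j: "j < n"
  shows "AE \<omega> in M. C X i \<omega> = C X j \<omega>"
proof -
  obtain h where h: "\<And>Y k. is_pool K n Y \<Longrightarrow> k < n \<Longrightarrow> AE \<omega> in M. C Y k \<omega> = h k (agg Y \<omega>)"
    using assms(2) unfolding strongly_aggregate_def by blast
  define \<tau> where "\<tau> = Transposition.transpose i j"
  have \<tau>: "\<tau> permutes {..<n}"
    using i j by (simp add: \<tau>_def permutes_swap_id)
  have "agg (permute_list \<tau> X) = agg X"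
    using X \<tau> agg_permute_list unfolding is_pool_def by blast
  then have "AE \<omega> in M. C (permute_list \<tau> X) i \<omega> = h i (agg X \<omega>)"
    using h[OF is_pool_permute_list[OF X \<tau>] i] by simp
  moreover have "AE \<omega> in M. C (permute_list \<tau> X) i \<omega> = C X j \<omega>"
    using assms(1) X \<tau> i unfolding reshuffling_def by (fastforce simp: \<tau>_def)
  moreover have "AE \<omega> in M. C X i \<omega> = h i (agg X \<omega>)"
    using h[OF X i] .
  ultimately show ?thesis
    by eventually_elim simp
qed

lemma uniform_rule_if_AE_contributions_eq:
  assumes "RS_rule M K n C" and "n \<ge> 1"
    and eq: "\<And>X i j. is_pool K n X \<Longrightarrow> i < n \<Longrightarrow> j < n \<Longrightarrow> AE \<omega> in M. C X i \<omega> = C X j \<omega>"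
  shows "uniform_rule M K n C"
  unfolding uniform_rule_def
proof (intro allI impI)
  fix X i
  assume X: "is_pool K n X" and i: "i < n"
  have "AE \<omega> in M. \<forall>j\<in>{..<n}. C X i \<omega> = C X j \<omega>"
    using eq[OF X i] by (intro eventually_ball_finite) auto
  moreover have "AE \<omega> in M. (\<Sum>j<n. C X j \<omega>) = agg X \<omega>"
    using assms(1) X unfolding RS_rule_def by blast
  ultimately show "AE \<omega> in M. C X i \<omega> = agg X \<omega> / real n"
  proof eventually_elim
    case (elim \<omega>)
    then have "agg X \<omega> = (\<Sum>j<n. C X i \<omega>)"
      by simp
    then have "agg X \<omega> = real n * C X i \<omega>"
      by simp
    then show ?case
      using \<open>n \<ge> 1\<close> by (simp add: field_simps)
  qed
qed

theorem theorem2: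
  fixes M :: "'a measure" and K :: "('a \<Rightarrow> real) set" and n :: nat
    and C :: "('a \<Rightarrow> real) list \<Rightarrow> nat \<Rightarrow> 'a \<Rightarrow> real"
  assumes "prob_space M"
    and "n \<ge> 1"
    and "convex_cone_rv M K"
    and "RS_rule M K n C"
  shows "uniform_rule M K n C \<longleftrightarrow> reshuffling M K n C \<and> strongly_aggregate M K n C"
proof
  assume "uniform_rule M K n C"
  then show "reshuffling M K n C \<and> strongly_aggregate M K n C"
    using reshuffling_if_uniform_rule strongly_aggregate_if_uniform_rule by blast
next
  assume "reshuffling M K n C \<and> strongly_aggregate M K n C"
  then show "uniform_rule M K n C"
    using uniform_rule_if_AE_contributions_eq[OF assms(4,2)]
      AE_contributions_eq_if_reshuffling_strongly_aggregate by blast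
qed

end
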